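(* Let $T$ be a completely non-unitary contraction on $H$. Then, in the strong symplectic Hilbert space $\mathbb{H}=H\oplus_\perp H$, $$A_T^{\perp_s}=A_T\oplus_\perp Q\oplus_\perp Q_*,$$ where the direct sum is orthogonal with respect to the Hilbert space inner product of $\mathbb{H}$.
   Context: $H$ is an infinite-dimensional separable complex Hilbert space with inner product $(\cdot,\cdot)_H$. A contraction is $T\in\mathbb{B}(H)$ with $\|T\|\le1$; it is completely non-unitary (c.n.u.) if there is no nonzero invariant subspace $\mathcal{K}$ with $T|_{\mathcal{K}}$ unitary. Put $\mathbb{K}=\ker(I-T^*T)$, $\mathbb{K}_*=\ker(I-TT^* )$. Let $\mathbb{H}=H\oplus_\perp H$ with strong symplectic structure $[(x_1,x_2),(y_1,y_2)]=i(x_1,y_1)_H-i(x_2,y_2)_H$, and for $S\subseteq\mathbb{H}$ let $S^{\perp_s}=\{a\in\mathbb{H}:[a,b]=0\ \forall b\in S\}$. Let $A_T=\{(x,Tx):x\in\mathbb{K}\}$, $Q=\{(x,0):x\in\mathbb{K}^\perp\}$ and $Q_*=\{(0,x):x\in\mathbb{K}_*^\perp\}$. *)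

theory Defs
  imports "HOL-Analysis.Analysis"
begin

text \<open>Its real part is the underlying real inner product, which provides norm, metric and
  topology (norm x = sqrt (Re (cinner x x))).\<close>

class complex_inner = real_inner +
  fixes scaleC :: "complex \<Rightarrow> 'a \<Rightarrow> 'a"  (infixr \<open>*\<^sub>C\<close> 75)
    and cinner :: "'a \<Rightarrow> 'a \<Rightarrow> complex"
  assumes scaleC_add_right: "c *\<^sub>C (x + y) = c *\<^sub>C x + c *\<^sub>C y"
    and scaleC_add_left: "(c + d) *\<^sub>C x = c *\<^sub>C x + d *\<^sub>C x"
    and scaleC_scaleC: "c *\<^sub>C (d *\<^sub>C x) = (c * d) *\<^sub>C x"
    and scaleC_one: "1 *\<^sub>C x = x"
    and scaleR_scaleC: "scaleR r x = complex_of_real r *\<^sub>C x"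
    and cinner_add_right: "cinner x (y + z) = cinner x y + cinner x z"
    and cinner_scaleC_right: "cinner x (c *\<^sub>C y) = c * cinner x y"
    and cinner_commute: "cinner y x = cnj (cinner x y)"
    and inner_cinner: "inner x y = Re (cinner x y)"

class chilbert_space = complex_inner + complete_space

definition csubspace :: "'a::complex_inner set \<Rightarrow> bool" where
  "csubspace S \<longleftrightarrow> 0 \<in> S \<and> (\<forall>x\<in>S. \<forall>y\<in>S. x + y \<in> S) \<and> (\<forall>c. \<forall>x\<in>S. c *\<^sub>C x \<in> S)"

definition cspan :: "'a::complex_inner set \<Rightarrow> 'a set" where
  "cspan S = {\<Sum>x\<in>F. c x *\<^sub>C x | F c. finite F \<and> F \<subseteq> S}"

definition separable_H :: "'a::complex_inner itself \<Rightarrow> bool" where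
  "separable_H _ \<longleftrightarrow> (\<exists>D::'a set. countable D \<and> closure D = UNIV)"

definition infinite_dimensional :: "'a::complex_inner itself \<Rightarrow> bool" where
  "infinite_dimensional _ \<longleftrightarrow> \<not> (\<exists>S::'a set. finite S \<and> cspan S = UNIV)"

definition clinear :: "('a::complex_inner \<Rightarrow> 'b::complex_inner) \<Rightarrow> bool" where
  "clinear f \<longleftrightarrow> (\<forall>x y. f (x + y) = f x + f y) \<and> (\<forall>c x. f (c *\<^sub>C x) = c *\<^sub>C f x)"

definition contraction :: "('a::complex_inner \<Rightarrow> 'a) \<Rightarrow> bool" where
  "contraction T \<longleftrightarrow> clinear T \<and> (\<forall>x. norm (T x) \<le> norm x)"

definition cadjoint :: "('a::complex_inner \<Rightarrow> 'a) \<Rightarrow> ('a \<Rightarrow> 'a)" where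
  "cadjoint T = (THE S. \<forall>x y. cinner (S x) y = cinner x (T y))"

definition cnu :: "('a::complex_inner \<Rightarrow> 'a) \<Rightarrow> bool" where
  "cnu T \<longleftrightarrow> \<not> (\<exists>K. csubspace K \<and> closed K \<and> K \<noteq> {0} \<and> T ` K \<subseteq> K
                    \<and> T ` K = K \<and> (\<forall>x\<in>K. norm (T x) = norm x))"

definition corth :: "'a::complex_inner set \<Rightarrow> 'a set" where
  "corth S = {x. \<forall>y\<in>S. cinner x y = 0}"

definition defectK :: "('a::complex_inner \<Rightarrow> 'a) \<Rightarrow> 'a set" where
  "defectK T = {x. x - cadjoint T (T x) = 0}"

definition defectK_star :: "('a::complex_inner \<Rightarrow> 'a) \<Rightarrow> 'a set" where
  "defectK_star T = {x. x - T (cadjoint T x) = 0}"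

definition hinner :: "'a::complex_inner \<times> 'a \<Rightarrow> 'a \<times> 'a \<Rightarrow> complex" where
  "hinner a b = cinner (fst a) (fst b) + cinner (snd a) (snd b)"

definition sympl :: "'a::complex_inner \<times> 'a \<Rightarrow> 'a \<times> 'a \<Rightarrow> complex" where
  "sympl a b = \<i> * cinner (fst a) (fst b) - \<i> * cinner (snd a) (snd b)"

definition sperp :: "('a::complex_inner \<times> 'a) set \<Rightarrow> ('a \<times> 'a) set" where
  "sperp S = {a. \<forall>b\<in>S. sympl a b = 0}"

definition A_T :: "('a::complex_inner \<Rightarrow> 'a) \<Rightarrow> ('a \<times> 'a) set" where
  "A_T T = {(x, T x) | x. x \<in> defectK T}"

definition Q_T :: "('a::complex_inner \<Rightarrow> 'a) \<Rightarrow> ('a \<times> 'a) set" where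
  "Q_T T = {(x, 0) | x. x \<in> corth (defectK T)}"

definition Q_star_T :: "('a::complex_inner \<Rightarrow> 'a) \<Rightarrow> ('a \<times> 'a) set" where
  "Q_star_T T = {(0, x) | x. x \<in> corth (defectK_star T)}"

definition horth_sets :: "('a::complex_inner \<times> 'a) set \<Rightarrow> ('a \<times> 'a) set \<Rightarrow> bool" where
  "horth_sets S U \<longleftrightarrow> (\<forall>a\<in>S. \<forall>b\<in>U. hinner a b = 0)"

text \<open>Orthogonal direct sum of three subsets: the sum set, with pairwise orthogonality
  as part of the claim.\<close>
definition sum3 :: "('a::complex_inner \<times> 'a) set \<Rightarrow> ('a \<times> 'a) set \<Rightarrow> ('a \<times> 'a) set \<Rightarrow> ('a \<times> 'a) set" where
  "sum3 A B C = {(fst a + fst b + fst c, snd a + snd b + snd c) | a b c. a \<in> A \<and> b \<in> B \<and> c \<in> C}"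

end

theory Submission
  imports Defs
begin

(* On K, the kernel of I - T^* T, the contraction T is isometric, (T u, T x) = (u, x), and it
   maps K into K_*, the kernel of I - T T^*, on which T T^* = I.  Hence (a1, a2) is
   symplectically orthogonal to A_T iff (a1, x) = (a2, T x) for all x in K.  Every element of
   A_T + Q + Q_* passes this test; conversely, split a2 = y + z with y in K_* and z orthogonal
   to K_*, put u = T^* y in K, and a1 - u turns out to be orthogonal to K. *)

section \<open>Nearest points in complete real inner product spaces\<close>

lemma parallelogram_law:
  fixes x y :: "'a::real_inner"
  shows "norm (x + y)^2 + norm (x - y)^2 = 2 * norm x^2 + 2 * norm y^2"
  by (simp add: power2_norm_eq_inner inner_add_left inner_add_right inner_diff_left
      inner_diff_right inner_commute)

lemma norm_diff_midpoint_sq: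
  fixes a x y :: "'a::real_inner"
  shows "norm (x - y)^2 = 2 * norm (a - x)^2 + 2 * norm (a - y)^2 - 4 * norm (a - (1/2) *\<^sub>R (x + y))^2"
proof -
  have "(a - x) + (a - y) = 2 *\<^sub>R (a - (1/2) *\<^sub>R (x + y))"
    by (simp add: algebra_simps scaleR_2)
  then have "norm ((a - x) + (a - y))^2 = 4 * norm (a - (1/2) *\<^sub>R (x + y))^2"
    by (simp add: power_mult_distrib)
  moreover have "norm (x - y) = norm ((a - x) - (a - y))"
    by (simp add: norm_minus_commute)
  ultimately show ?thesis
    using parallelogram_law[of "a - x" "a - y"] by simp
qed

lemma convex_dist_sq_le:
  fixes S :: "'a::real_inner set"
  assumes "convex S" "x \<in> S" "y \<in> S"
  shows "dist x y ^ 2 \<le> 2 * dist a x ^ 2 + 2 * dist a y ^ 2 - 4 * infdist a S ^ 2"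
proof -
  have "(1/2) *\<^sub>R (x + y) \<in> S"
    using convexD[OF assms, of "1/2" "1/2"] by (simp add: scaleR_right_distrib)
  then have "infdist a S ^ 2 \<le> norm (a - (1/2) *\<^sub>R (x + y)) ^ 2"
    using infdist_le infdist_nonneg by (metis dist_norm power_mono)
  then show ?thesis
    using norm_diff_midpoint_sq[of x y a] by (simp add: dist_norm)
qed

lemma Cauchy_if_dist_le_add:
  fixes X :: "nat \<Rightarrow> 'a::metric_space"
  assumes "\<And>m n. dist (X m) (X n) \<le> f m + f n" and "f \<longlonglongrightarrow> 0"
  shows "Cauchy X"
proof (rule metric_CauchyI)
  fix e :: real assume "e > 0"
  then obtain N where N: "\<forall>n\<ge>N. norm (f n) < e / 2"
    using LIMSEQ_D[OF assms(2), of "e / 2"] by auto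
  show "\<exists>N. \<forall>m\<ge>N. \<forall>n\<ge>N. dist (X m) (X n) < e"
  proof (intro exI allI impI)
    fix m n assume "N \<le> m" "N \<le> n"
    then have "f m < e / 2" "f n < e / 2"
      using N by auto
    then show "dist (X m) (X n) < e"
      using assms(1)[of m n] by linarith
  qed
qed

lemma infdist_approx:
  assumes "A \<noteq> {}" "e > 0"
  shows "\<exists>a\<in>A. dist x a < infdist x A + e"
  using assms cINF_less_iff[of A "dist x" "infdist x A + e"] by (simp add: infdist_def)

lemma minimizing_sequence_exists:
  assumes "S \<noteq> {}"
  shows "\<exists>ms. (\<forall>n. ms n \<in> S) \<and> (\<lambda>n. dist a (ms n)) \<longlonglongrightarrow> infdist a S"
proof -
  let ?d = "infdist a S"
  have "\<exists>m. m \<in> S \<and> dist a m < ?d + inverse (real (Suc n))" for n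
    using infdist_approx[OF assms, of "inverse (real (Suc n))" a] by auto
  then obtain ms where ms: "\<forall>n. ms n \<in> S \<and> dist a (ms n) < ?d + inverse (real (Suc n))"
    by (metis choice)
  have "(\<lambda>n. dist a (ms n)) \<longlonglongrightarrow> ?d"
  proof (rule tendsto_sandwich)
    show "\<forall>\<^sub>F n in sequentially. ?d \<le> dist a (ms n)"
      using ms by (simp add: infdist_le)
    show "\<forall>\<^sub>F n in sequentially. dist a (ms n) \<le> ?d + inverse (real (Suc n))"
      using ms by (intro always_eventually allI less_imp_le) blast
    show "(\<lambda>n. ?d + inverse (real (Suc n))) \<longlonglongrightarrow> ?d"
      using tendsto_add[OF tendsto_const LIMSEQ_inverse_real_of_nat] by simp
  qed (rule tendsto_const)
  then show ?thesis
    using ms by blast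
qed

lemma minimizing_sequence_Cauchy:
  fixes S :: "'a::real_inner set"
  assumes "convex S" "\<And>n. ms n \<in> S" "(\<lambda>n. dist a (ms n)) \<longlonglongrightarrow> infdist a S"
  shows "Cauchy ms"
proof -
  let ?d = "infdist a S"
  define g where "g n = sqrt (2 * (dist a (ms n) ^ 2 - ?d ^ 2))" for n
  show ?thesis
  proof (rule Cauchy_if_dist_le_add)
    have nonneg: "dist a (ms k) ^ 2 - ?d ^ 2 \<ge> 0" for k
      using infdist_le[OF assms(2), of a k] infdist_nonneg[of a S] power_mono by fastforce
    show "dist (ms m) (ms n) \<le> g m + g n" for m n
    proof -
      have "dist (ms m) (ms n) \<le> sqrt (2 * (dist a (ms m) ^ 2 - ?d ^ 2) + 2 * (dist a (ms n) ^ 2 - ?d ^ 2))"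
        using convex_dist_sq_le[OF assms(1,2,2), of m n a] nonneg by (simp add: real_le_rsqrt)
      also have "\<dots> \<le> g m + g n"
        unfolding g_def using nonneg by (intro sqrt_add_le_add_sqrt) auto
      finally show ?thesis .
    qed
    have "(\<lambda>n. 2 * (dist a (ms n) ^ 2 - ?d ^ 2)) \<longlonglongrightarrow> 2 * (?d ^ 2 - ?d ^ 2)"
      by (intro tendsto_intros assms(3))
    then show "g \<longlonglongrightarrow> 0"
      unfolding g_def using tendsto_real_sqrt by fastforce
  qed
qed

lemma nearest_point_exists:
  fixes S :: "'a::{real_inner,complete_space} set"
  assumes "closed S" "convex S" "S \<noteq> {}"
  shows "\<exists>m\<in>S. dist a m = infdist a S"
proof -
  obtain ms where ms: "\<And>n. ms n \<in> S" and dist_lim: "(\<lambda>n. dist a (ms n)) \<longlonglongrightarrow> infdist a S"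
    using minimizing_sequence_exists[OF assms(3)] by blast
  then obtain m where lim: "ms \<longlonglongrightarrow> m"
    using minimizing_sequence_Cauchy[OF assms(2)] Cauchy_convergent convergent_def by blast
  have "m \<in> S"
    using closed_sequentially[OF assms(1)] ms lim by blast
  moreover have "(\<lambda>n. dist a (ms n)) \<longlonglongrightarrow> dist a m"
    by (intro tendsto_intros lim)
  then have "dist a m = infdist a S"
    using dist_lim by (rule LIMSEQ_unique)
  ultimately show ?thesis
    by blast
qed

lemma nearest_point_subspace_orthogonal:
  fixes M :: "'a::real_inner set"
  assumes "subspace M" "m \<in> M" "dist a m = infdist a M" "y \<in> M"
  shows "inner (a - m) y = 0"
proof (cases "y = 0")
  case False
  define c where "c = inner (a - m) y"
  define t where "t = c / inner y y"
  have "m + t *\<^sub>R y \<in> M"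
    using assms(1,2,4) by (simp add: subspace_add subspace_scale)
  then have "norm (a - m) \<le> norm ((a - m) - t *\<^sub>R y)"
    using assms(3) infdist_le[of "m + t *\<^sub>R y" M a] by (simp add: dist_norm algebra_simps)
  then have "norm (a - m)^2 \<le> norm ((a - m) - t *\<^sub>R y)^2"
    by (simp add: power_mono)
  also have "\<dots> = norm (a - m)^2 - 2 * t * c + t^2 * inner y y"
    unfolding power2_norm_eq_inner c_def
    by (simp add: inner_diff_left inner_diff_right inner_commute power2_eq_square algebra_simps)
  also have "\<dots> = norm (a - m)^2 - c^2 / inner y y"
    using False by (simp add: t_def power2_eq_square field_simps)
  finally have "c^2 / inner y y \<le> 0"
    by simp
  moreover have "inner y y > 0"
    using False by simp
  ultimately have "c^2 \<le> 0"
    by (simp add: divide_le_0_iff)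
  then show ?thesis
    by (simp add: c_def)
qed simp

lemma orthogonal_projection_exists:
  fixes M :: "'a::{real_inner,complete_space} set"
  assumes "closed M" "subspace M"
  shows "\<exists>m\<in>M. \<forall>y\<in>M. inner (a - m) y = 0"
proof -
  have "M \<noteq> {}"
    using assms(2) subspace_0 by blast
  then obtain m where m: "m \<in> M" "dist a m = infdist a M"
    using nearest_point_exists[OF assms(1) subspace_imp_convex[OF assms(2)]] by blast
  then have "\<forall>y\<in>M. inner (a - m) y = 0"
    by (simp add: nearest_point_subspace_orthogonal[OF assms(2)])
  then show ?thesis
    using m(1) by blast
qed

section \<open>Complex inner products, the Riesz representation and the adjoint\<close>

lemma scaleC_zero_left [simp]: "(0::complex) *\<^sub>C (x::'a::complex_inner) = 0"
  using scaleR_scaleC[of 0 x] by simp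

lemma scaleC_minus_one: "(-1) *\<^sub>C (x::'a::complex_inner) = - x"
  using scaleR_scaleC[of "-1" x] by simp

lemma cinner_zero_right [simp]: "cinner (x::'a::complex_inner) 0 = 0"
  using cinner_add_right[of x 0 0] by simp

lemma cinner_zero_left [simp]: "cinner 0 (x::'a::complex_inner) = 0"
  by (metis cinner_commute cinner_zero_right complex_cnj_zero)

lemma cinner_add_left: "cinner ((x::'a::complex_inner) + y) z = cinner x z + cinner y z"
  by (metis cinner_commute cinner_add_right complex_cnj_add)

lemma cinner_scaleC_left: "cinner (c *\<^sub>C (x::'a::complex_inner)) y = cnj c * cinner x y"
  by (metis cinner_commute cinner_scaleC_right complex_cnj_mult)

lemma cinner_minus_right: "cinner (x::'a::complex_inner) (- y) = - cinner x y"
  by (metis cinner_scaleC_right scaleC_minus_one mult_minus1)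

lemma cinner_minus_left: "cinner (- (x::'a::complex_inner)) y = - cinner x y"
  by (metis cinner_commute cinner_minus_right complex_cnj_minus)

lemma cinner_diff_right: "cinner (x::'a::complex_inner) (y - z) = cinner x y - cinner x z"
  using cinner_add_right[of x y "- z"] cinner_minus_right[of x z] by simp

lemma cinner_diff_left: "cinner ((x::'a::complex_inner) - y) z = cinner x z - cinner y z"
  using cinner_add_left[of x "- y" z] cinner_minus_left[of y z] by simp

lemma cinner_eq_zero_iff_inner:
  "cinner (x::'a::complex_inner) y = 0 \<longleftrightarrow> inner x y = 0 \<and> inner x (\<i> *\<^sub>C y) = 0"
  by (simp add: inner_cinner cinner_scaleC_right complex_eq_iff)

lemma cinner_self_eq_zero: "cinner (x::'a::complex_inner) x = 0 \<longleftrightarrow> x = 0"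
  by (auto simp: cinner_eq_zero_iff_inner)

lemma cinner_ext: "(\<And>y. cinner (a::'a::complex_inner) y = cinner b y) \<Longrightarrow> a = b"
  by (metis cinner_diff_left cinner_self_eq_zero diff_self eq_iff_diff_eq_0)

lemma cinner_eq_zero_commute: "cinner (x::'a::complex_inner) y = 0 \<longleftrightarrow> cinner y x = 0"
  by (metis cinner_commute complex_cnj_zero_iff)

lemma csubspace_imp_subspace: "csubspace M \<Longrightarrow> subspace M"
  unfolding csubspace_def subspace_def by (simp add: scaleR_scaleC)

lemma csubspace_decomposition:
  fixes M :: "'a::chilbert_space set"
  assumes "closed M" "csubspace M"
  shows "\<exists>m\<in>M. a - m \<in> corth M"
proof -
  obtain m where "m \<in> M" "\<forall>y\<in>M. inner (a - m) y = 0"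
    using orthogonal_projection_exists[OF assms(1) csubspace_imp_subspace[OF assms(2)]] by blast
  moreover have "\<i> *\<^sub>C y \<in> M" if "y \<in> M" for y
    using that assms(2) by (simp add: csubspace_def)
  ultimately show ?thesis
    unfolding corth_def by (auto simp: cinner_eq_zero_iff_inner)
qed

lemma clinear_zero: "clinear f \<Longrightarrow> f 0 = 0"
  unfolding clinear_def by (metis scaleC_zero_left)

lemma contraction_imp_bounded_linear: "contraction f \<Longrightarrow> bounded_linear f"
  unfolding contraction_def clinear_def
  by (intro bounded_linear_intro[where K=1]) (auto simp: scaleR_scaleC)

lemma riesz_representation:
  fixes f :: "'a::chilbert_space \<Rightarrow> complex"
  assumes add: "\<And>y z. f (y + z) = f y + f z"
    and scale: "\<And>c y. f (c *\<^sub>C y) = c * f y"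
    and closed_kernel: "closed {y. f y = 0}"
  shows "\<exists>z. \<forall>y. cinner z y = f y"
proof (cases "\<forall>v. f v = 0")
  case False
  then obtain v where v: "f v \<noteq> 0"
    by blast
  define N where "N = {y. f y = 0}"
  have diff: "f (y - z) = f y - f z" for y z
    using add[of y "- z"] scale[of "-1" z] by (simp add: scaleC_minus_one)
  have "csubspace N"
    unfolding csubspace_def N_def using add scale[of 0 0] scale by auto
  then obtain m where m: "m \<in> N" "v - m \<in> corth N"
    using csubspace_decomposition closed_kernel N_def by blast
  \<comment> \<open>r is orthogonal to the kernel of f, which has codimension one.\<close>
  define r where "r = v - m"
  have fr: "f r \<noteq> 0"
    using v m(1) diff by (simp add: r_def N_def)
  then have rr: "cinner r r \<noteq> 0"
    using scale[of 0 0] by (auto simp: cinner_self_eq_zero)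
  show ?thesis
  proof (intro exI allI)
    fix y
    have "y - (f y / f r) *\<^sub>C r \<in> N"
      using diff scale fr by (simp add: N_def)
    then have "cinner r (y - (f y / f r) *\<^sub>C r) = 0"
      using m(2) by (simp add: r_def corth_def)
    then have "cinner r y = (f y / f r) * cinner r r"
      by (simp add: cinner_diff_right cinner_scaleC_right)
    then show "cinner (cnj (f r / cinner r r) *\<^sub>C r) y = f y"
      using fr rr by (simp add: cinner_scaleC_left)
  qed
qed (intro exI[of _ 0], simp)

lemma cadjoint_exists:
  fixes T :: "'a::chilbert_space \<Rightarrow> 'a"
  assumes "clinear T" "bounded_linear T"
  shows "\<exists>S. \<forall>x y. cinner (S x) y = cinner x (T y)"
proof -
  have "\<exists>z. \<forall>y. cinner z y = cinner x (T y)" for x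
  proof (rule riesz_representation)
    show "cinner x (T (y + z)) = cinner x (T y) + cinner x (T z)" for y z
      using assms(1) by (simp add: clinear_def cinner_add_right)
    show "cinner x (T (c *\<^sub>C y)) = c * cinner x (T y)" for c y
      using assms(1) by (simp add: clinear_def cinner_scaleC_right)
    have "{y. cinner x (T y) = 0} = {y. inner x (T y) = 0} \<inter> {y. inner (\<i> *\<^sub>C x) (T y) = 0}"
      by (auto simp: inner_cinner cinner_scaleC_left complex_eq_iff)
    moreover have "closed {y. inner x (T y) = 0}" "closed {y. inner (\<i> *\<^sub>C x) (T y) = 0}"
      by (intro closed_Collect_eq continuous_intros linear_continuous_on assms(2))+
    ultimately show "closed {y. cinner x (T y) = 0}"
      by (simp add: closed_Int)
  qed
  then show ?thesis
    by (rule choice[OF allI])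
qed

lemma cinner_cadjoint:
  fixes T :: "'a::chilbert_space \<Rightarrow> 'a"
  assumes "clinear T" "bounded_linear T"
  shows "cinner (cadjoint T x) y = cinner x (T y)"
proof -
  obtain S where S: "\<forall>x y. cinner (S x) y = cinner x (T y)"
    using cadjoint_exists[OF assms] by blast
  have "\<forall>x y. cinner (cadjoint T x) y = cinner x (T y)"
    unfolding cadjoint_def
  proof (rule theI[of _ S])
    show "S' = S" if "\<forall>x y. cinner (S' x) y = cinner x (T y)" for S'
      using S that by (intro ext cinner_ext) auto
  qed (rule S)
  then show ?thesis
    by blast
qed

lemma contraction_cadjoint:
  fixes T :: "'a::chilbert_space \<Rightarrow> 'a"
  assumes "contraction T"
  shows "contraction (cadjoint T)"
proof -
  let ?S = "cadjoint T"
  have lin: "clinear T"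
    using assms by (simp add: contraction_def)
  have adj: "cinner (?S x) y = cinner x (T y)" for x y
    using cinner_cadjoint[OF lin contraction_imp_bounded_linear[OF assms]] .
  have "?S (x + y) = ?S x + ?S y" for x y
    by (rule cinner_ext) (simp add: adj cinner_add_left)
  moreover have "?S (c *\<^sub>C x) = c *\<^sub>C ?S x" for c x
    by (rule cinner_ext) (simp add: adj cinner_scaleC_left)
  ultimately have "clinear ?S"
    by (simp add: clinear_def)
  moreover have "norm (?S y) \<le> norm y" for y
  proof -
    have "norm (?S y)^2 = inner y (T (?S y))"
      by (simp add: power2_norm_eq_inner inner_cinner adj)
    also have "\<dots> \<le> norm y * norm (T (?S y))"
      by (rule norm_cauchy_schwarz)
    also have "\<dots> \<le> norm y * norm (?S y)"
      using assms by (simp add: contraction_def mult_left_mono)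
    finally have "norm (?S y) * norm (?S y) \<le> norm y * norm (?S y)"
      by (simp add: power2_eq_square)
    then show ?thesis
      by (cases "norm (?S y) = 0") auto
  qed
  ultimately show ?thesis
    by (simp add: contraction_def)
qed

section \<open>The symplectic complement of A_T\<close>

lemma mem_defectK: "x \<in> defectK T \<longleftrightarrow> cadjoint T (T x) = x"
  by (auto simp: defectK_def)

lemma mem_defectK_star: "x \<in> defectK_star T \<longleftrightarrow> T (cadjoint T x) = x"
  by (auto simp: defectK_star_def)

lemma defectK_imp_defectK_star: "x \<in> defectK T \<Longrightarrow> T x \<in> defectK_star T"
  by (simp add: mem_defectK mem_defectK_star)

lemma defectK_star_imp_defectK: "y \<in> defectK_star T \<Longrightarrow> cadjoint T y \<in> defectK T"
  by (simp add: mem_defectK mem_defectK_star)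

context
  fixes T :: "'a::chilbert_space \<Rightarrow> 'a"
  assumes contr: "contraction T"
begin

private lemma clinear_T: "clinear T"
  using contr by (simp add: contraction_def)

private lemma cinner_cadjoint_T: "cinner (cadjoint T x) y = cinner x (T y)"
  using cinner_cadjoint[OF clinear_T contraction_imp_bounded_linear[OF contr]] .

lemma cinner_defectK_isometric:
  assumes "x \<in> defectK T"
  shows "cinner (T u) (T x) = cinner u x"
proof -
  have "cinner (T x) (T u) = cinner x u"
    using assms cinner_cadjoint_T[of "T x" u] by (simp add: mem_defectK)
  then show ?thesis
    using cinner_commute[of "T x" "T u"] cinner_commute[of x u] by simp
qed

lemma closed_defectK_star: "closed (defectK_star T)"
proof -
  have "bounded_linear (\<lambda>x. T (cadjoint T x))"
    using contraction_imp_bounded_linear[OF contr]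
      contraction_imp_bounded_linear[OF contraction_cadjoint[OF contr]]
    by (rule bounded_linear_compose)
  then have "bounded_linear (\<lambda>x. x - T (cadjoint T x))"
    by (rule bounded_linear_sub[OF bounded_linear_ident])
  then have "closed {x. x - T (cadjoint T x) = 0}"
    by (intro closed_Collect_eq linear_continuous_on continuous_on_const)
  then show ?thesis
    by (simp add: defectK_star_def)
qed

lemma csubspace_defectK_star: "csubspace (defectK_star T)"
proof -
  have "clinear (\<lambda>x. T (cadjoint T x))"
    using clinear_T contraction_cadjoint[OF contr] by (simp add: contraction_def clinear_def)
  then have "T (cadjoint T 0) = 0"
    and "T (cadjoint T (x + y)) = T (cadjoint T x) + T (cadjoint T y)"
    and "T (cadjoint T (c *\<^sub>C x)) = c *\<^sub>C T (cadjoint T x)" for x y c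
    by (simp_all add: clinear_zero[of "\<lambda>x. T (cadjoint T x)", simplified] clinear_def)
  then show ?thesis
    by (simp add: csubspace_def mem_defectK_star)
qed

lemma mem_sperp_A_T:
  "p \<in> sperp (A_T T) \<longleftrightarrow> (\<forall>x\<in>defectK T. cinner (fst p) x = cinner (snd p) (T x))"
proof -
  have "sympl p (x, T x) = \<i> * (cinner (fst p) x - cinner (snd p) (T x))" for x
    by (simp add: sympl_def right_diff_distrib)
  then show ?thesis
    by (auto simp: sperp_def A_T_def)
qed

lemma sum3_subset_sperp_A_T: "sum3 (A_T T) (Q_T T) (Q_star_T T) \<subseteq> sperp (A_T T)"
proof
  fix p assume "p \<in> sum3 (A_T T) (Q_T T) (Q_star_T T)"
  then obtain u w z where u: "u \<in> defectK T" and w: "w \<in> corth (defectK T)"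
    and z: "z \<in> corth (defectK_star T)" and p: "p = (u + w, T u + z)"
    by (auto simp: sum3_def A_T_def Q_T_def Q_star_T_def)
  have "cinner (u + w) x = cinner (T u + z) (T x)" if x: "x \<in> defectK T" for x
  proof -
    have "cinner w x = 0" "cinner z (T x) = 0"
      using w z x defectK_imp_defectK_star[OF x] by (auto simp: corth_def)
    then show ?thesis
      using cinner_defectK_isometric[OF x] by (simp add: cinner_add_left)
  qed
  then show "p \<in> sperp (A_T T)"
    by (simp add: mem_sperp_A_T p)
qed

lemma sperp_A_T_subset_sum3: "sperp (A_T T) \<subseteq> sum3 (A_T T) (Q_T T) (Q_star_T T)"
proof
  fix p assume "p \<in> sperp (A_T T)"
  then have p: "cinner (fst p) x = cinner (snd p) (T x)" if "x \<in> defectK T" for x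
    using that by (simp add: mem_sperp_A_T)
  obtain y where y: "y \<in> defectK_star T" and z: "snd p - y \<in> corth (defectK_star T)"
    using csubspace_decomposition[OF closed_defectK_star csubspace_defectK_star] by blast
  define u where "u = cadjoint T y"
  have u: "u \<in> defectK T" "T u = y"
    using y by (simp_all add: u_def defectK_star_imp_defectK mem_defectK_star)
  have "fst p - u \<in> corth (defectK T)"
    unfolding corth_def
  proof (intro CollectI ballI)
    fix x assume x: "x \<in> defectK T"
    have "cinner (fst p - u) x = cinner (snd p - y) (T x)"
      by (simp add: p[OF x] u_def cinner_diff_left cinner_cadjoint_T)
    also have "\<dots> = 0"
      using z defectK_imp_defectK_star[OF x] by (simp add: corth_def)
    finally show "cinner (fst p - u) x = 0" .
  qed
  moreover have "p = (u + (fst p - u) + 0, T u + 0 + (snd p - y))"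
    using u by simp
  ultimately show "p \<in> sum3 (A_T T) (Q_T T) (Q_star_T T)"
    unfolding sum3_def A_T_def Q_T_def Q_star_T_def using u z
    by (intro CollectI exI[of _ "(u, T u)"] exI[of _ "(fst p - u, 0)"] exI[of _ "(0, snd p - y)"])
      auto
qed

end

lemma horth_sets_A_T_Q_T: "horth_sets (A_T T) (Q_T T)"
  by (auto simp: horth_sets_def A_T_def Q_T_def hinner_def corth_def cinner_eq_zero_commute)

lemma horth_sets_A_T_Q_star_T: "horth_sets (A_T T) (Q_star_T T)"
  by (auto simp: horth_sets_def A_T_def Q_star_T_def hinner_def corth_def cinner_eq_zero_commute
      dest: defectK_imp_defectK_star)

lemma horth_sets_Q_T_Q_star_T: "horth_sets (Q_T T) (Q_star_T T)"
  by (auto simp: horth_sets_def Q_T_def Q_star_T_def hinner_def)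

theorem lemma4p2:
  fixes T :: "'a::chilbert_space \<Rightarrow> 'a"
  assumes "separable_H TYPE('a)"
    and "infinite_dimensional TYPE('a)"
    and "contraction T"
    and "cnu T"
  shows "sperp (A_T T) = sum3 (A_T T) (Q_T T) (Q_star_T T)
         \<and> horth_sets (A_T T) (Q_T T) \<and> horth_sets (A_T T) (Q_star_T T)
         \<and> horth_sets (Q_T T) (Q_star_T T)"
  using sperp_A_T_subset_sum3[OF assms(3)] sum3_subset_sperp_A_T[OF assms(3)]
  by (simp add: horth_sets_A_T_Q_T horth_sets_A_T_Q_star_T horth_sets_Q_T_Q_star_T)

end
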